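(* For the submodule $M=[z-w]$ of $H^2(\mathbb D^2)$ and every integer $k\ge1$, \[ \Sigma_k(M)=\sum_{m=1}^\infty\frac{m^2}{(m+k-1)^2(m+k)^2}=(2k^2-2k+1)\sum_{n=k}^\infty\frac1{n^2}-(2k-1). \] Consequently $\Sigma_1=\frac{\pi^2}{6}-1$, $\Sigma_2=\frac56\pi^2-8$, $\Sigma_3=\frac{13}{6}\pi^2-\frac{85}{4}$, the sequence $\{\Sigma_k(M)\}_{k\ge1}$ is strictly decreasing, and as $k\to\infty$ \[ \Sigma_k(M)=\frac1{3k}+\frac1{6k^2}+\frac1{10k^3}+\frac1{15k^4}+O\!\left(\frac1{k^5}\right). \]
   Context: $H^2(\mathbb D^2)$ is the Hardy space on the bidisk (monomials $z^aw^b$ orthonormal); $[q]$ is the smallest closed subspace containing $q$ invariant under multiplication by $z$ and $w$. Let $p=z-w$. For $n\ge0$ let $A^n=(a_{i,j})_{i,j=0}^n$ with $a_{i,j}=\langle pw^{|i-j|},pz^{|i-j|}\rangle$ (the tridiagonal Toeplitz matrix with diagonal $2$ and off-diagonals $-1$); $D_0=1$, $D_n=\det A^{n-1}$ ($n\ge1$); $A^n_{i,j}$ is the $(i,j)$ cofactor of $A^n$ ($(-1)^{i+j}$ times the minor deleting row $i$ and column $j$). Define $\phi_0=\psi_0=p/\|p\|$ and for $n\ge1$ $\phi_n=\frac{\sum_{j=0}^n pA^n_{0,j}z^jw^{n-j}}{\sqrt{D_{n+1}D_n}}$, $\psi_n=\frac{\sum_{j=0}^n pA^n_{n,j}z^jw^{n-j}}{\sqrt{D_{n+1}D_n}}$,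 orthonormal bases of $M\ominus zM$ and $M\ominus wM$ for $M=[p]$. For $k\ge0$, $\Sigma_k(M):=\sum_{n\ge0}|\langle w^k\phi_n,z^k\psi_n\rangle|^2$. *)

theory Defs
  imports "HOL-Analysis.Analysis" "HOL-Library.Landau_Symbols" "Jordan_Normal_Form.Determinant"
begin

text \<open>Polynomials in two variables z, w, represented by their coefficient functions:
  f (a,b) is the coefficient of z^a w^b.  Monomials are orthonormal in H^2(D^2), so the
  inner product of two polynomials is the sum of products of coefficients.\<close>

type_synonym poly2 = "nat \<times> nat \<Rightarrow> complex"

definition h2_inner :: "poly2 \<Rightarrow> poly2 \<Rightarrow> complex" where
  "h2_inner f g = (\<Sum>\<^sub>\<infinity> ab. f ab * cnj (g ab))"

definition h2_norm :: "poly2 \<Rightarrow> real" where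
  "h2_norm f = sqrt (Re (h2_inner f f))"

definition mono_mul :: "nat \<Rightarrow> nat \<Rightarrow> poly2 \<Rightarrow> poly2" where
  "mono_mul a b f = (\<lambda>(i, j). if a \<le> i \<and> b \<le> j then f (i - a, j - b) else 0)"

definition p_zw :: poly2 where
  "p_zw = (\<lambda>(i, j). if (i, j) = (1, 0) then 1 else if (i, j) = (0, 1) then -1 else 0)"

definition absdiff :: "nat \<Rightarrow> nat \<Rightarrow> nat" where
  "absdiff i j = (if i \<le> j then j - i else i - j)"

definition A_mat :: "nat \<Rightarrow> complex mat" where
  "A_mat n = mat (n + 1) (n + 1)
     (\<lambda>(i, j). h2_inner (mono_mul 0 (absdiff i j) p_zw) (mono_mul (absdiff i j) 0 p_zw))"

definition D_det :: "nat \<Rightarrow> complex" where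
  "D_det n = (if n = 0 then 1 else det (A_mat (n - 1)))"

definition phi :: "nat \<Rightarrow> poly2" where
  "phi n = (if n = 0 then (\<lambda>ab. p_zw ab / complex_of_real (h2_norm p_zw))
            else (\<lambda>ab. (\<Sum>j\<le>n. cofactor (A_mat n) 0 j * mono_mul j (n - j) p_zw ab)
                        / csqrt (D_det (n + 1) * D_det n)))"

definition psi :: "nat \<Rightarrow> poly2" where
  "psi n = (if n = 0 then (\<lambda>ab. p_zw ab / complex_of_real (h2_norm p_zw))
            else (\<lambda>ab. (\<Sum>j\<le>n. cofactor (A_mat n) n j * mono_mul j (n - j) p_zw ab)
                        / csqrt (D_det (n + 1) * D_det n)))"

definition Sigma_term :: "nat \<Rightarrow> nat \<Rightarrow> real" where
  "Sigma_term k n = (cmod (h2_inner (mono_mul 0 k (phi n)) (mono_mul k 0 (psi n))))\<^sup>2"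

definition Sigma_M :: "nat \<Rightarrow> real" where
  "Sigma_M k = (\<Sum>n. Sigma_term k n)"

end

theory Submission
  imports Defs "HOL-Real_Asymp.Real_Asymp"
begin

(* The identity A * adj A = det A * 1 turns the tridiagonal shape of the Gram matrix A^n
   into three-term recurrences along the rows of cofactors, whence A^n_{0,j} = n + 1 - j,
   A^n_{n,j} = j + 1 and D_n = n + 1. So phi_n and psi_n are explicit combinations of the
   monomials z^i w^(n+1-i), and <w^k phi_n, z^k psi_n> = -(n + 2 - k) / ((n + 1)(n + 2)),
   which vanishes for n < k - 1. Partial fractions split the resulting rational series into
   tails of sum 1/n^2 and a telescoping sum; strict monotonicity in k holds termwise.
   For the asymptotics the tail sum_{n>=k} 1/n^2, the trigamma function at k, is squeezed
   between two consecutive truncations of its Euler-Maclaurin expansion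
   1/k + 1/(2k^2) + 1/(6k^3) - 1/(30k^5) + 1/(42k^7), each comparison being a telescoping
   inequality between rational functions. *)

lemma h2_inner_finite_support:
  assumes "finite S" "\<And>ab. ab \<notin> S \<Longrightarrow> f ab * cnj (g ab) = 0"
  shows "h2_inner f g = (\<Sum>ab\<in>S. f ab * cnj (g ab))"
proof -
  have "h2_inner f g = infsum (\<lambda>ab. f ab * cnj (g ab)) S"
    unfolding h2_inner_def by (rule infsum_cong_neutral) (auto simp: assms)
  then show ?thesis using assms by simp
qed

lemma h2_inner_shifted_p:
  "h2_inner (mono_mul 0 d p_zw) (mono_mul d 0 p_zw) = (if d = 0 then 2 else if d = 1 then -1 else 0)"
proof -
  have "h2_inner (mono_mul 0 d p_zw) (mono_mul d 0 p_zw) =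
      (\<Sum>ab\<in>{(1,d), (0,Suc d)}. mono_mul 0 d p_zw ab * cnj (mono_mul d 0 p_zw ab))"
    by (rule h2_inner_finite_support) (auto simp: mono_mul_def p_zw_def split: if_splits)
  also have "\<dots> = (if d = 0 then 2 else if d = 1 then -1 else 0)"
    by (auto simp: mono_mul_def p_zw_def)
  finally show ?thesis .
qed

lemma h2_norm_p: "h2_norm p_zw = sqrt 2"
proof -
  have "h2_inner p_zw p_zw = (\<Sum>ab\<in>{(1,0), (0,1)}. p_zw ab * cnj (p_zw ab))"
    by (rule h2_inner_finite_support) (auto simp: p_zw_def split: if_splits)
  also have "\<dots> = 2" by (simp add: p_zw_def)
  finally show ?thesis by (simp add: h2_norm_def)
qed

section \<open>Cofactors of the Gram matrix\<close>

lemma sum_row_mult_cofactor: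
  assumes A: "A \<in> carrier_mat n n" and "i < n" "j < n"
  shows "(\<Sum>k<n. A $$ (i,k) * cofactor A j k) = (if i = j then det A else 0)"
proof -
  have "(A * adj_mat A) $$ (i,j) = (\<Sum>k<n. A $$ (i,k) * cofactor A j k)"
    unfolding times_mat_def scalar_prod_def adj_mat_def using assms by (auto intro: sum.cong)
  then show ?thesis using adj_mat(2)[OF A] assms by (cases "i = j") simp_all
qed

lemma A_mat_carrier: "A_mat n \<in> carrier_mat (Suc n) (Suc n)"
  by (simp add: A_mat_def)

lemma A_mat_entry:
  assumes "i \<le> n" "k \<le> n"
  shows "A_mat n $$ (i,k) = (if k = i then 2 else if k + 1 = i \<or> k = i + 1 then -1 else 0)"
  using assms by (auto simp: A_mat_def h2_inner_shifted_p absdiff_def)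

lemma A_mat_row_mult:
  assumes "i \<le> n"
  shows "(\<Sum>k<Suc n. A_mat n $$ (i,k) * c k) =
    2 * c i - (if 0 < i then c (i - 1) else 0) - (if i < n then c (i + 1) else 0)"
proof -
  have "(\<Sum>k<Suc n. A_mat n $$ (i,k) * c k) =
      (\<Sum>k<Suc n. (if k = i then 2 * c k else 0) - (if k = i - 1 \<and> 0 < i then c k else 0)
          - (if k = i + 1 then c k else 0))"
    using assms by (intro sum.cong) (auto simp: A_mat_entry)
  then show ?thesis
    using assms by (auto simp: sum_subtractf sum.delta' lessThan_Suc_atMost)
qed

lemma A_mat_cofactor_recurrence:
  assumes "i \<le> n" "r \<le> n" "i \<noteq> r"
  shows "2 * cofactor (A_mat n) r i =
    (if 0 < i then cofactor (A_mat n) r (i - 1) else 0) + (if i < n then cofactor (A_mat n) r (i + 1) else 0)"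
proof -
  have "2 * cofactor (A_mat n) r i - (if 0 < i then cofactor (A_mat n) r (i - 1) else 0)
      - (if i < n then cofactor (A_mat n) r (i + 1) else 0)
      = (\<Sum>k<Suc n. A_mat n $$ (i,k) * cofactor (A_mat n) r k)"
    by (rule A_mat_row_mult[OF assms(1), symmetric])
  also have "\<dots> = 0"
    using sum_row_mult_cofactor[OF A_mat_carrier, of i n r] assms by (simp del: sum.lessThan_Suc)
  finally show ?thesis
    unfolding eq_iff_diff_eq_0[of "2 * _"] diff_diff_eq[symmetric] .
qed

lemma A_mat_cofactor_0_n: "cofactor (A_mat n) 0 n = 1"
proof -
  let ?M = "mat_delete (A_mat n) 0 n"
  have M: "?M \<in> carrier_mat n n"
    using mat_delete_carrier[OF A_mat_carrier[of n]] by simp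
  have entry: "?M $$ (i,j) = A_mat n $$ (Suc i, j)" if "i < n" "j < n" for i j
    using that by (simp add: mat_delete_def A_mat_def)
  have "upper_triangular ?M"
    unfolding upper_triangular_def using M by (auto simp: entry A_mat_entry)
  then have "det ?M = prod_list (diag_mat ?M)"
    using det_upper_triangular M by blast
  also have "\<dots> = (\<Prod>i=0..<n. -1)"
    unfolding prod_list_diag_prod using M by (intro prod.cong) (auto simp: entry A_mat_entry)
  finally show ?thesis
    unfolding cofactor_def by (simp flip: power_add)
qed

lemma A_mat_cofactor_n_0: "cofactor (A_mat n) n 0 = 1"
proof -
  let ?M = "mat_delete (A_mat n) n 0"
  have M: "?M \<in> carrier_mat n n"
    using mat_delete_carrier[OF A_mat_carrier[of n]] by simp
  have entry: "?M $$ (i,j) = A_mat n $$ (i, Suc j)" if "i < n" "j < n" for i j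
    using that by (simp add: mat_delete_def A_mat_def)
  have "det ?M = prod_list (diag_mat ?M)"
    by (rule det_lower_triangular[OF _ M]) (auto simp: entry A_mat_entry)
  also have "\<dots> = (\<Prod>i=0..<n. -1)"
    unfolding prod_list_diag_prod using M by (intro prod.cong) (auto simp: entry A_mat_entry)
  finally show ?thesis
    unfolding cofactor_def by (simp flip: power_add)
qed

(* The if-term encodes the boundary value d (-1) = 0. *)
lemma linear_if_second_differences_vanish:
  fixes d :: "nat \<Rightarrow> 'a::comm_ring_1"
  assumes "\<And>t. t < N \<Longrightarrow> d (Suc t) = 2 * d t - (if t = 0 then 0 else d (t - 1))"
  shows "t \<le> N \<Longrightarrow> d t = of_nat (t + 1) * d 0"
proof (induction t rule: less_induct)
  case (less t)
  consider "t = 0" | "t = Suc 0" | s where "t = Suc (Suc s)"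
    by (metis not0_implies_Suc)
  then show ?case
  proof cases
    case 1
    then show ?thesis by simp
  next
    case 2
    then show ?thesis using assms[of 0] less.prems by simp
  next
    case 3
    have "d (Suc s) = of_nat (s + 2) * d 0" "d s = of_nat (s + 1) * d 0"
      using less.IH[of "Suc s"] less.IH[of s] less.prems 3 by simp_all
    then show ?thesis
      using assms[of "Suc s"] less.prems 3 by (simp add: algebra_simps)
  qed
qed

lemma A_mat_cofactor_first_row: "j \<le> n \<Longrightarrow> cofactor (A_mat n) 0 j = of_nat (n + 1 - j)"
proof -
  assume "j \<le> n"
  have "cofactor (A_mat n) 0 (n - t) = of_nat (t + 1) * cofactor (A_mat n) 0 (n - 0)" if "t \<le> n" for t
  proof (rule linear_if_second_differences_vanish[where d = "\<lambda>t. cofactor (A_mat n) 0 (n - t)", OF _ that])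
    fix t assume "t < n"
    then obtain m where n: "n = Suc (t + m)"
      using less_iff_Suc_add by blast
    have "2 * cofactor (A_mat n) 0 (Suc m) =
        cofactor (A_mat n) 0 m + (if t = 0 then 0 else cofactor (A_mat n) 0 (Suc (Suc m)))"
      using A_mat_cofactor_recurrence[of "Suc m" n 0] n by simp
    moreover have "n - t = Suc m" "n - Suc t = m" "t \<noteq> 0 \<Longrightarrow> n - (t - 1) = Suc (Suc m)"
      using n by auto
    ultimately show "cofactor (A_mat n) 0 (n - Suc t) = 2 * cofactor (A_mat n) 0 (n - t)
        - (if t = 0 then 0 else cofactor (A_mat n) 0 (n - (t - 1)))"
      by (cases "t = 0") (simp_all add: eq_diff_eq)
  qed
  from this[of "n - j"] \<open>j \<le> n\<close> show ?thesis
    by (simp add: A_mat_cofactor_0_n Suc_diff_le)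
qed

lemma A_mat_cofactor_last_row: "j \<le> n \<Longrightarrow> cofactor (A_mat n) n j = of_nat (j + 1)"
proof -
  assume "j \<le> n"
  have "cofactor (A_mat n) n j = of_nat (j + 1) * cofactor (A_mat n) n 0"
  proof (rule linear_if_second_differences_vanish[where d = "cofactor (A_mat n) n", OF _ \<open>j \<le> n\<close>])
    fix t assume "t < n"
    then show "cofactor (A_mat n) n (Suc t) = 2 * cofactor (A_mat n) n t
        - (if t = 0 then 0 else cofactor (A_mat n) n (t - 1))"
      using A_mat_cofactor_recurrence[of t n n] by auto
  qed
  then show ?thesis by (simp add: A_mat_cofactor_n_0)
qed

lemma det_A_mat: "det (A_mat n) = of_nat (n + 2)"
proof -
  have "det (A_mat n) = (\<Sum>k<Suc n. A_mat n $$ (0,k) * cofactor (A_mat n) 0 k)"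
    using sum_row_mult_cofactor[OF A_mat_carrier, of 0 n 0] by (simp del: sum.lessThan_Suc)
  also have "\<dots> = 2 * cofactor (A_mat n) 0 0 - (if 0 < n then cofactor (A_mat n) 0 1 else 0)"
    using A_mat_row_mult[of 0 n] by (simp del: sum.lessThan_Suc)
  also have "\<dots> = of_nat (n + 2)"
    by (cases "n = 0") (auto simp: A_mat_cofactor_first_row of_nat_diff)
  finally show ?thesis .
qed

lemma D_det_eq: "D_det m = of_nat (m + 1)"
  by (cases m) (auto simp: D_det_def det_A_mat)

section \<open>The bases phi and psi\<close>

definition orth_scale :: "nat \<Rightarrow> complex" where
  "orth_scale n = complex_of_real (sqrt (real ((n + 1) * (n + 2))))"

lemma csqrt_D_det_mult: "csqrt (D_det (n + 1) * D_det n) = orth_scale n"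
proof -
  have "D_det (n + 1) * D_det n = complex_of_real (real ((n + 1) * (n + 2)))"
    by (simp add: D_det_eq algebra_simps)
  then show ?thesis
    unfolding orth_scale_def by (simp only: csqrt_of_real of_nat_0_le_iff)
qed

lemma orth_scale_0: "orth_scale 0 = complex_of_real (h2_norm p_zw)"
  by (simp add: orth_scale_def h2_norm_p)

lemma orth_scale_nonzero: "orth_scale n \<noteq> 0"
  unfolding orth_scale_def of_real_eq_0_iff real_sqrt_eq_zero_cancel_iff of_nat_eq_0_iff by simp

lemma orth_scale_mult_cnj: "orth_scale n * cnj (orth_scale n) = of_nat ((n + 1) * (n + 2))"
proof -
  have "sqrt (real ((n + 1) * (n + 2))) * sqrt (real ((n + 1) * (n + 2))) = real ((n + 1) * (n + 2))"
    by (rule real_sqrt_mult_self[THEN trans]) simp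
  then show ?thesis
    unfolding orth_scale_def complex_cnj_complex_of_real of_real_mult[symmetric] by simp
qed

lemma sum_mono_mul_p_coeff:
  "(\<Sum>l\<le>n. c l * mono_mul l (n - l) p_zw (i, j)) =
     (if i + j = n + 1 \<and> 0 < i then c (i - 1) else 0) - (if i + j = n + 1 \<and> i \<le> n then c i else 0)"
proof -
  have "(\<Sum>l\<le>n. c l * mono_mul l (n - l) p_zw (i, j)) =
      (\<Sum>l\<le>n. (if l = i - 1 \<and> i + j = n + 1 \<and> 0 < i then c l else 0)
        - (if l = i \<and> i + j = n + 1 \<and> i \<le> n then c l else 0))"
    by (intro sum.cong) (auto simp: mono_mul_def p_zw_def)
  then show ?thesis
    by (auto simp: sum_subtractf sum.delta')
qed

lemma phi_coeff:
  "phi n (i, j) = (if i + j = n + 1 then if i = 0 then - of_nat (n + 1) else 1 else 0) / orth_scale n"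
proof (cases "n = 0")
  case True
  then show ?thesis by (auto simp: phi_def orth_scale_0 p_zw_def)
next
  case False
  then have "phi n (i, j) = (\<Sum>l\<le>n. cofactor (A_mat n) 0 l * mono_mul l (n - l) p_zw (i, j)) / orth_scale n"
    by (simp add: phi_def flip: csqrt_D_det_mult)
  also have "\<dots> = (\<Sum>l\<le>n. of_nat (n + 1 - l) * mono_mul l (n - l) p_zw (i, j)) / orth_scale n"
    by (intro arg_cong[where f = "\<lambda>x. x / orth_scale n"] sum.cong) (auto simp: A_mat_cofactor_first_row)
  finally show ?thesis
    by (cases "i = n + 1") (auto simp: sum_mono_mul_p_coeff of_nat_diff)
qed

lemma psi_coeff:
  "psi n (i, j) = (if i + j = n + 1 then if i = n + 1 then of_nat (n + 1) else -1 else 0) / orth_scale n"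
proof (cases "n = 0")
  case True
  then show ?thesis by (auto simp: psi_def orth_scale_0 p_zw_def)
next
  case False
  then have "psi n (i, j) = (\<Sum>l\<le>n. cofactor (A_mat n) n l * mono_mul l (n - l) p_zw (i, j)) / orth_scale n"
    by (simp add: psi_def flip: csqrt_D_det_mult)
  also have "\<dots> = (\<Sum>l\<le>n. of_nat (l + 1) * mono_mul l (n - l) p_zw (i, j)) / orth_scale n"
    by (intro arg_cong[where f = "\<lambda>x. x / orth_scale n"] sum.cong) (auto simp: A_mat_cofactor_last_row)
  finally show ?thesis
    by (cases "i = n + 1") (auto simp: sum_mono_mul_p_coeff)
qed

lemma h2_inner_shifted_phi_psi:
  assumes k: "1 \<le> k"
  shows "h2_inner (mono_mul 0 k (phi n)) (mono_mul k 0 (psi n)) =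
    - of_nat (n + 2 - k) / of_nat ((n + 1) * (n + 2))"
proof -
  define T where "T = (\<lambda>a. (a, n + 1 + k - a)) ` {k..n + 1}"
  define c :: complex where "c = - 1 / of_nat ((n + 1) * (n + 2))"
  have T_iff: "(a, b) \<in> T \<longleftrightarrow> k \<le> a \<and> k \<le> b \<and> a + b = n + 1 + k" for a b
    unfolding T_def using k by auto
  have prod: "mono_mul 0 k (phi n) ab * cnj (mono_mul k 0 (psi n) ab) = (if ab \<in> T then c else 0)" for ab
  proof -
    obtain a b where ab: "ab = (a, b)" by fastforce
    show ?thesis
    proof (cases "ab \<in> T")
      case True
      then have "mono_mul 0 k (phi n) ab * cnj (mono_mul k 0 (psi n) ab)
          = (1 / orth_scale n) * cnj (- 1 / orth_scale n)"
        using k by (auto simp: ab T_iff mono_mul_def phi_coeff psi_coeff)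
      also have "\<dots> = c"
        using orth_scale_mult_cnj[of n] orth_scale_nonzero[of n] by (simp add: c_def divide_simps)
      finally show ?thesis using True by simp
    qed (auto simp: ab T_iff mono_mul_def phi_coeff psi_coeff)
  qed
  have "h2_inner (mono_mul 0 k (phi n)) (mono_mul k 0 (psi n)) =
      (\<Sum>ab\<in>T. mono_mul 0 k (phi n) ab * cnj (mono_mul k 0 (psi n) ab))"
    by (rule h2_inner_finite_support) (simp_all add: prod T_def)
  also have "\<dots> = of_nat (card T) * c"
    by (simp add: prod)
  also have "card T = n + 2 - k"
    unfolding T_def by (subst card_image) (auto simp: inj_on_def)
  finally show ?thesis by (simp add: c_def)
qed

lemma Sigma_term_eq:
  assumes "1 \<le> k"
  shows "Sigma_term k n = (real (n + 2 - k) / real ((n + 1) * (n + 2)))\<^sup>2"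
proof -
  have "cmod (- of_nat (n + 2 - k) / of_nat ((n + 1) * (n + 2)) :: complex)
      = real (n + 2 - k) / real ((n + 1) * (n + 2))"
    by (simp only: norm_divide norm_minus_cancel norm_of_nat)
  then show ?thesis
    unfolding Sigma_term_def h2_inner_shifted_phi_psi[OF assms] by simp
qed

section \<open>Closed form of Sigma_k\<close>

definition zeta2_tail :: "nat \<Rightarrow> real" where
  "zeta2_tail k = (\<Sum>n. 1 / (real (n + k))\<^sup>2)"

lemma zeta2_tail_sums: "(\<lambda>n. 1 / (real (n + k))\<^sup>2) sums zeta2_tail k"
proof -
  have "summable (\<lambda>n. 1 / (real (Suc n))\<^sup>2)"
    using inverse_squares_sums by (simp add: sums_iff add.commute)
  then have "summable (\<lambda>n. 1 / (real n)\<^sup>2)"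
    using summable_Suc_iff[of "\<lambda>n. 1 / (real n)\<^sup>2"] by blast
  then have "summable (\<lambda>n. 1 / (real (n + k))\<^sup>2)"
    by (rule summable_iff_shift[where f = "\<lambda>n. 1 / (real n)\<^sup>2", THEN iffD2])
  then show ?thesis
    unfolding zeta2_tail_def by (rule summable_sums)
qed

lemma zeta2_tail_1: "zeta2_tail 1 = pi\<^sup>2 / 6"
  using inverse_squares_sums zeta2_tail_sums[of 1] by (simp add: sums_iff add.commute)

lemma zeta2_tail_Suc: "zeta2_tail k = 1 / (real k)\<^sup>2 + zeta2_tail (Suc k)"
  using suminf_split_head[OF sums_summable[OF zeta2_tail_sums[of k]]]
  unfolding zeta2_tail_def by simp

definition Sigma_rational_term :: "nat \<Rightarrow> nat \<Rightarrow> real" where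
  "Sigma_rational_term k m =
    (real (m + 1))\<^sup>2 / ((real (m + 1) + real k - 1)\<^sup>2 * (real (m + 1) + real k)\<^sup>2)"

lemma Sigma_rational_term_partial_fractions:
  assumes "1 \<le> k"
  shows "Sigma_rational_term k m =
    (real k)\<^sup>2 * (1 / (real (m + Suc k))\<^sup>2) + (real k - 1)\<^sup>2 * (1 / (real (m + k))\<^sup>2)
    - 2 * real k * (real k - 1) * (1 / real (m + k) - 1 / real (Suc m + k))"
proof -
  have "real m + real k \<noteq> 0" "real m + real k + 1 \<noteq> 0"
    using assms by linarith+
  then show ?thesis
    unfolding Sigma_rational_term_def
    by (simp add: divide_simps) (simp add: algebra_simps power2_eq_square)
qed

lemma Sigma_rational_term_sums:
  assumes k: "1 \<le> k"
  shows "Sigma_rational_term k sums ((2 * (real k)\<^sup>2 - 2 * real k + 1) * zeta2_tail k - (2 * real k - 1))"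
proof -
  have "(\<lambda>m. 1 / real (m + k)) \<longlonglongrightarrow> 0"
    using LIMSEQ_ignore_initial_segment[OF lim_inverse_n', of k] by (simp add: add.commute)
  then have "(\<lambda>m. 1 / real (m + k) - 1 / real (Suc m + k)) sums (1 / real k)"
    using telescope_sums' by fastforce
  then have "Sigma_rational_term k sums
      ((real k)\<^sup>2 * zeta2_tail (Suc k) + (real k - 1)\<^sup>2 * zeta2_tail k
        - 2 * real k * (real k - 1) * (1 / real k))"
    unfolding Sigma_rational_term_partial_fractions[OF k, abs_def]
    by (intro sums_diff sums_add sums_mult zeta2_tail_sums)
  also have "(real k)\<^sup>2 * zeta2_tail (Suc k) + (real k - 1)\<^sup>2 * zeta2_tail k
      - 2 * real k * (real k - 1) * (1 / real k)
      = (2 * (real k)\<^sup>2 - 2 * real k + 1) * zeta2_tail k - (2 * real k - 1)"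
    unfolding zeta2_tail_Suc[of k] using k by (simp add: field_simps power2_eq_square)
  finally show ?thesis .
qed

lemma Sigma_term_shift:
  assumes "1 \<le> k"
  shows "Sigma_term k (m + (k - 1)) = Sigma_rational_term k m"
proof -
  have "real ((m + (k - 1) + 1) * (m + (k - 1) + 2)) = (real (m + 1) + real k - 1) * (real (m + 1) + real k)"
    using assms by (simp add: of_nat_diff algebra_simps)
  then show ?thesis
    using assms by (simp add: Sigma_term_eq Sigma_rational_term_def power_divide power_mult_distrib)
qed

lemma Sigma_term_sums:
  assumes k: "1 \<le> k"
  shows "Sigma_term k sums ((2 * (real k)\<^sup>2 - 2 * real k + 1) * zeta2_tail k - (2 * real k - 1))"
proof -
  have "Sigma_term k i = 0" if "i < k - 1" for i
    using that by (simp add: Sigma_term_eq[OF k])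
  moreover have "(\<lambda>m. Sigma_term k (m + (k - 1))) = Sigma_rational_term k"
    using Sigma_term_shift[OF k] by (intro ext) simp
  ultimately show ?thesis
    using sums_zero_iff_shift[of "k - 1" "Sigma_term k"] Sigma_rational_term_sums[OF k] by simp
qed

lemma Sigma_M_eq:
  "1 \<le> k \<Longrightarrow> Sigma_M k = (2 * (real k)\<^sup>2 - 2 * real k + 1) * zeta2_tail k - (2 * real k - 1)"
  unfolding Sigma_M_def using Sigma_term_sums sums_unique by metis

lemma sums_less:
  fixes f g :: "nat \<Rightarrow> real"
  assumes "\<And>n. f n < g n" "f sums s" "g sums t"
  shows "s < t"
proof -
  have "(\<lambda>n. g n - f n) sums (t - s)"
    by (rule sums_diff[OF assms(3,2)])
  then show ?thesis
    using suminf_pos[of "\<lambda>n. g n - f n"] assms(1) by (simp add: sums_iff)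
qed

lemma Sigma_rational_term_Suc_less:
  assumes "1 \<le> k"
  shows "Sigma_rational_term (Suc k) m < Sigma_rational_term k m"
proof -
  have "((real m + real k) * (real m + real k + 1))\<^sup>2 < ((real m + real k + 1) * (real m + real k + 2))\<^sup>2"
    using assms by (intro power_strict_mono mult_strict_mono) auto
  moreover have "0 < ((real m + real k) * (real m + real k + 1))\<^sup>2"
    using assms by simp
  ultimately show ?thesis
    unfolding Sigma_rational_term_def
    by (simp add: power_mult_distrib add_ac divide_strict_left_mono)
qed

lemma Sigma_M_Suc_less: "1 \<le> k \<Longrightarrow> Sigma_M (Suc k) < Sigma_M k"
  using sums_less[OF Sigma_rational_term_Suc_less Sigma_rational_term_sums Sigma_rational_term_sums]
  by (simp add: Sigma_M_eq)

lemma Sigma_M_small_values: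
  shows "Sigma_M 1 = pi\<^sup>2 / 6 - 1" "Sigma_M 2 = 5 / 6 * pi\<^sup>2 - 8" "Sigma_M 3 = 13 / 6 * pi\<^sup>2 - 85 / 4"
proof -
  have 2: "zeta2_tail 2 = pi\<^sup>2 / 6 - 1"
    using zeta2_tail_Suc[of 1] zeta2_tail_1 by (simp add: numeral_2_eq_2)
  have 3: "zeta2_tail 3 = pi\<^sup>2 / 6 - 5 / 4"
    using zeta2_tail_Suc[of 2] 2 by (simp add: numeral_2_eq_2 numeral_3_eq_3)
  show "Sigma_M 1 = pi\<^sup>2 / 6 - 1"
    using Sigma_M_eq[of 1] zeta2_tail_1 by simp
  show "Sigma_M 2 = 5 / 6 * pi\<^sup>2 - 8"
    using Sigma_M_eq[of 2] 2 by simp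
  show "Sigma_M 3 = 13 / 6 * pi\<^sup>2 - 85 / 4"
    using Sigma_M_eq[of 3] 3 by simp
qed

section \<open>Asymptotic expansion\<close>

definition trigamma_lower :: "real \<Rightarrow> real" where
  "trigamma_lower x = 1 / x + 1 / (2 * x ^ 2) + 1 / (6 * x ^ 3) - 1 / (30 * x ^ 5)"

definition trigamma_upper :: "real \<Rightarrow> real" where
  "trigamma_upper x = trigamma_lower x + 1 / (42 * x ^ 7)"

lemma trigamma_lower_diff_le:
  assumes x: "x > 0"
  shows "trigamma_lower x - trigamma_lower (x + 1) \<le> 1 / x\<^sup>2"
proof -
  have "trigamma_lower x - trigamma_lower (x + 1) - 1 / x\<^sup>2 =
      - (x^2/30 + 7*x^3/30 + 8*x^4/15 + x^5/2 + x^6/6) / (x^7 * (x + 1)^7)"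
    unfolding trigamma_lower_def using x
    by (simp add: divide_simps) (simp add: eval_nat_numeral algebra_simps)
  moreover have "0 \<le> (x^2/30 + 7*x^3/30 + 8*x^4/15 + x^5/2 + x^6/6) / (x^7 * (x + 1)^7)"
    using x by simp
  ultimately show ?thesis by linarith
qed

lemma trigamma_upper_diff_ge:
  assumes x: "x > 0"
  shows "1 / x\<^sup>2 \<le> trigamma_upper x - trigamma_upper (x + 1)"
proof -
  have "trigamma_upper x - trigamma_upper (x + 1) - 1 / x\<^sup>2 =
      (1/42 + x/6 + 7*x^2/15 + 3*x^3/5 + 3*x^4/10) / (x^7 * (x + 1)^7)"
    unfolding trigamma_upper_def trigamma_lower_def using x
    by (simp add: divide_simps) (simp add: eval_nat_numeral algebra_simps)
  moreover have "0 \<le> (1/42 + x/6 + 7*x^2/15 + 3*x^3/5 + 3*x^4/10) / (x^7 * (x + 1)^7)"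
    using x by simp
  ultimately show ?thesis by linarith
qed

lemma telescoping_le_sums:
  fixes f a :: "nat \<Rightarrow> real"
  assumes "\<And>n. f n - f (Suc n) \<le> a n" "f \<longlonglongrightarrow> 0" "a sums s"
  shows "f 0 \<le> s"
  using sums_le[OF assms(1) telescope_sums'[OF assms(2)] assms(3)] by simp

lemma sums_le_telescoping:
  fixes f a :: "nat \<Rightarrow> real"
  assumes "\<And>n. a n \<le> f n - f (Suc n)" "f \<longlonglongrightarrow> 0" "a sums s"
  shows "s \<le> f 0"
  using sums_le[OF assms(1) assms(3) telescope_sums'[OF assms(2)]] by simp

lemma zeta2_tail_bounds:
  assumes "1 \<le> k"
  shows "trigamma_lower (real k) \<le> zeta2_tail k" "zeta2_tail k \<le> trigamma_upper (real k)"
proof -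
  have pos: "real (n + k) > 0" for n
    using assms by simp
  have "(\<lambda>n. trigamma_lower (real (n + k))) \<longlonglongrightarrow> 0"
    unfolding trigamma_lower_def by real_asymp
  with trigamma_lower_diff_le[OF pos] show "trigamma_lower (real k) \<le> zeta2_tail k"
    using telescoping_le_sums[OF _ _ zeta2_tail_sums, where f = "\<lambda>n. trigamma_lower (real (n + k))"]
    by (simp add: add_ac)
  have "(\<lambda>n. trigamma_upper (real (n + k))) \<longlonglongrightarrow> 0"
    unfolding trigamma_upper_def trigamma_lower_def by real_asymp
  with trigamma_upper_diff_ge[OF pos] show "zeta2_tail k \<le> trigamma_upper (real k)"
    using sums_le_telescoping[OF _ _ zeta2_tail_sums, where f = "\<lambda>n. trigamma_upper (real (n + k))"]
    by (simp add: add_ac)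
qed

lemma Sigma_M_expansion_error:
  assumes k: "1 \<le> k"
  shows "\<bar>Sigma_M k - (1 / (3 * real k) + 1 / (6 * (real k)\<^sup>2) + 1 / (10 * (real k)^3)
      + 1 / (15 * (real k)^4))\<bar> \<le> 1 / (real k)^5"
proof -
  define x where "x = real k"
  define c where "c = 2 * x\<^sup>2 - 2 * x + 1"
  define r where "r = zeta2_tail k - trigamma_lower x"
  have x: "x \<ge> 1"
    using k by (simp add: x_def)
  have r: "0 \<le> r" "r \<le> 1 / (42 * x^7)"
    using zeta2_tail_bounds[OF k] by (simp_all add: r_def x_def trigamma_upper_def)
  have c: "0 \<le> c" "c \<le> 2 * x\<^sup>2"
    unfolding c_def using x by (auto simp: power2_eq_square)
  have "Sigma_M k - (1 / (3 * x) + 1 / (6 * x\<^sup>2) + 1 / (10 * x^3) + 1 / (15 * x^4))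
      = c * r - 1 / (30 * x^5)"
    using x unfolding Sigma_M_eq[OF k] r_def c_def trigamma_lower_def x_def[symmetric]
    by (simp add: divide_simps) (simp add: eval_nat_numeral algebra_simps)
  moreover have "c * r \<le> 2 * x\<^sup>2 * (1 / (42 * x^7))"
    using c r by (intro mult_mono) auto
  moreover have "2 * x\<^sup>2 * (1 / (42 * x^7)) = 1 / (21 * x^5)"
    using x by (simp add: field_simps power2_eq_square flip: power_Suc power_Suc2)
  moreover have "0 \<le> c * r"
    using c r by simp
  moreover have "0 < 1 / x^5"
    using x by simp
  ultimately show ?thesis
    unfolding x_def[symmetric] by (simp add: abs_le_iff)
qed

lemma Sigma_M_asymptotics:
  "(\<lambda>k. Sigma_M k - (1 / (3 * real k) + 1 / (6 * (real k)\<^sup>2) + 1 / (10 * (real k)^3)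
      + 1 / (15 * (real k)^4))) \<in> O(\<lambda>k. 1 / (real k)^5)"
proof (rule bigoI[where c = 1])
  show "\<forall>\<^sub>F k in at_top. norm (Sigma_M k - (1 / (3 * real k) + 1 / (6 * (real k)\<^sup>2)
      + 1 / (10 * (real k)^3) + 1 / (15 * (real k)^4))) \<le> 1 * norm (1 / (real k)^5)"
    using eventually_ge_at_top[of "1::nat"]
    by eventually_elim (use Sigma_M_expansion_error in simp)
qed

theorem mainTheorem11:
  shows "(\<forall>k::nat. k \<ge> 1 \<longrightarrow>
            summable (Sigma_term k)
          \<and> (\<lambda>m. (real (m + 1))\<^sup>2 / ((real (m + 1) + real k - 1)\<^sup>2 * (real (m + 1) + real k)\<^sup>2))
              sums Sigma_M k
          \<and> Sigma_M k = (2 * (real k)\<^sup>2 - 2 * real k + 1) * (\<Sum>n. 1 / (real (n + k))\<^sup>2)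
                       - (2 * real k - 1))
     \<and> Sigma_M 1 = pi\<^sup>2 / 6 - 1
     \<and> Sigma_M 2 = 5 / 6 * pi\<^sup>2 - 8
     \<and> Sigma_M 3 = 13 / 6 * pi\<^sup>2 - 85 / 4
     \<and> (\<forall>k::nat. k \<ge> 1 \<longrightarrow> Sigma_M (k + 1) < Sigma_M k)
     \<and> (\<lambda>k. Sigma_M k - (1 / (3 * real k) + 1 / (6 * (real k)\<^sup>2) + 1 / (10 * (real k)^3)
                        + 1 / (15 * (real k)^4)))
         \<in> O(\<lambda>k. 1 / (real k)^5)"
proof (intro conjI allI impI Sigma_M_small_values Sigma_M_asymptotics)
  fix k :: nat
  assume k: "1 \<le> k"
  show "summable (Sigma_term k)"
    using Sigma_term_sums[OF k] by (rule sums_summable)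
  show "(\<lambda>m. (real (m + 1))\<^sup>2 / ((real (m + 1) + real k - 1)\<^sup>2 * (real (m + 1) + real k)\<^sup>2))
      sums Sigma_M k"
    using Sigma_rational_term_sums[OF k] unfolding Sigma_M_eq[OF k] Sigma_rational_term_def[abs_def] .
  show "Sigma_M k = (2 * (real k)\<^sup>2 - 2 * real k + 1) * (\<Sum>n. 1 / (real (n + k))\<^sup>2) - (2 * real k - 1)"
    using Sigma_M_eq[OF k] by (simp add: zeta2_tail_def)
  show "Sigma_M (k + 1) < Sigma_M k"
    using Sigma_M_Suc_less[OF k] by simp
qed

end
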